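(* Let $\Pi$ be a homogeneous Poisson point process of intensity $\lambda>0$ in $\mathbb{R}^d$, let $S\subseteq\mathbb{R}^d$ be a Borel set with $\mathcal{L}S\in(0,\infty)$, let $r>0$, and let $X$ be a point chosen uniformly at random from $[\Pi]\cap S$ conditionally on $\Pi$ (when non-empty). Let $Z\subseteq\mathbb{R}^d$ be a Borel set of finite Lebesgue measure disjoint from $S$. Then $$\mathbf{P}\big(X\text{ exists and is }r\text{-isolated}\,\big|\,\Pi(Z)=0\big)\ge\mathbf{P}\big(X\text{ exists and is }r\text{-isolated}\big).$$
   Context: $[\Pi]$ denotes the support (set of points) of $\Pi$; $\mathcal{L}$ is Lebesgue measure. A point $x\in[\Pi]$ is called $r$-isolated if no other point of $[\Pi]$ lies within distance $r$ of $x$. *)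

theory Defs
  imports "HOL-Probability.Probability"
begin

text \<open>Point configurations (simple point patterns) in a Euclidean space are represented
  as sets of points.\<close>

definition config_space :: "('a::euclidean_space) set measure" where
  "config_space = sigma UNIV {{P. card (P \<inter> B) = k} | B k. B \<in> sets borel}"

definition poisson_pp :: "'w measure \<Rightarrow> real \<Rightarrow> ('w \<Rightarrow> ('a::euclidean_space) set) \<Rightarrow> bool" where
  "poisson_pp M lam PP \<longleftrightarrow>
     prob_space M \<and>
     PP \<in> measurable M config_space \<and>
     (\<forall>B \<in> sets lborel. emeasure lborel B < \<infinity> \<longrightarrow>
        (AE \<omega> in M. finite (PP \<omega> \<inter> B)) \<and>
        (\<forall>k::nat. measure M {\<omega> \<in> space M. card (PP \<omega> \<inter> B) = k}
            = (lam * measure lborel B) ^ k / fact k * exp (- lam * measure lborel B))) \<and>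
     (\<forall>(I::nat set) (B::nat \<Rightarrow> 'a set). finite I \<longrightarrow>
        (\<forall>i\<in>I. B i \<in> sets lborel \<and> emeasure lborel (B i) < \<infinity>) \<longrightarrow>
        disjoint_family_on B I \<longrightarrow>
        prob_space.indep_vars M (\<lambda>_. count_space UNIV) (\<lambda>i \<omega>. card (PP \<omega> \<inter> B i)) I)"

text \<open>X is a point chosen uniformly at random from PP \<inter> S conditionally on PP (when
  non-empty): X is a random point, lying in PP \<inter> S whenever that set is non-empty, and for
  every measurable set C of configurations and every Borel set A,
  P(PP \<in> C, PP \<inter> S \<noteq> {}, X \<in> A) = E[1_C(PP) * #(PP \<inter> S \<inter> A) / #(PP \<inter> S)].\<close>

definition uniform_selection ::
  "'w measure \<Rightarrow> ('w \<Rightarrow> ('a::euclidean_space) set) \<Rightarrow> 'a set \<Rightarrow> ('w \<Rightarrow> 'a) \<Rightarrow> bool" where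
  "uniform_selection M PP S X \<longleftrightarrow>
     X \<in> borel_measurable M \<and>
     (\<forall>\<omega>\<in>space M. PP \<omega> \<inter> S \<noteq> {} \<longrightarrow> X \<omega> \<in> PP \<omega> \<inter> S) \<and>
     (\<forall>C \<in> sets config_space. \<forall>A \<in> sets borel.
        measure M {\<omega> \<in> space M. PP \<omega> \<in> C \<and> PP \<omega> \<inter> S \<noteq> {} \<and> X \<omega> \<in> A}
        = (\<integral>\<omega>. indicator C (PP \<omega>) * real (card (PP \<omega> \<inter> S \<inter> A)) / real (card (PP \<omega> \<inter> S)) \<partial>M))"

definition r_isolated :: "real \<Rightarrow> ('a::metric_space) set \<Rightarrow> 'a \<Rightarrow> bool" where
  "r_isolated r P x \<longleftrightarrow> x \<in> P \<and> (\<forall>y\<in>P. y \<noteq> x \<longrightarrow> dist x y > r)"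

end

theory Submission
  imports Defs
begin

(* Write N for the event that Z contains no point of \<Pi>.  Counts in disjoint sets are independent,
  so the configuration \<Pi> - Z outside Z is independent of the number of points in Z.  The weight
  #(\<Pi> \<inter> S \<inter> A) / #(\<Pi> \<inter> S) of the uniform selection only sees points of S, which lie outside Z;
  hence for rectangles E the defining identity of the selection factorises as
    P((\<Pi> - Z, X) \<in> E, X exists, N) = P(N) P((\<Pi> - Z, X) \<in> E, X exists),
  and a Dynkin argument extends this to every measurable E.  Take for E the (measurable) set of
  pairs (Q, x) with x r-isolated in Q.  On N nothing changes, and deleting the points of Z can only
  make X more isolated, so
    P(X exists and is r-isolated, N) = P(N) P(X exists, X is r-isolated in \<Pi> - Z)
      \<ge> P(N) P(X exists and is r-isolated). *)

section \<open>Disjoint refinements\<close>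

definition atoms :: "'a set set \<Rightarrow> 'a set set" where
  "atoms BB = (\<lambda>x. {y. \<forall>B\<in>BB. y \<in> B \<longleftrightarrow> x \<in> B}) ` \<Union>BB"

lemma finite_atoms:
  assumes "finite BB"
  shows "finite (atoms BB)"
proof -
  have "atoms BB \<subseteq> (\<lambda>T. {y. \<forall>B\<in>BB. y \<in> B \<longleftrightarrow> B \<in> T}) ` Pow BB"
    unfolding atoms_def by (auto intro!: image_eqI[of _ _ "{B \<in> BB. _ \<in> B}"])
  then show ?thesis
    using assms by (meson finite_Pow_iff finite_imageI finite_subset)
qed

lemma atoms_sets:
  assumes "finite BB" "BB \<subseteq> sets N"
  shows "atoms BB \<subseteq> sets N"
proof
  fix A assume "A \<in> atoms BB"
  then obtain x where x: "x \<in> \<Union>BB" and A: "A = {y. \<forall>B\<in>BB. y \<in> B \<longleftrightarrow> x \<in> B}"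
    unfolding atoms_def by blast
  have "A = (\<Inter>B\<in>{B \<in> BB. x \<in> B}. B) - (\<Union>B\<in>{B \<in> BB. x \<notin> B}. B)"
    using x sets.sets_into_space assms(2) unfolding A by auto
  also have "\<dots> \<in> sets N"
    using x assms by (intro sets.Diff sets.finite_INT sets.finite_UN) auto
  finally show "A \<in> sets N" .
qed

lemma disjoint_atoms: "disjoint (atoms BB)"
  unfolding atoms_def by (rule disjointI) blast

lemma atoms_subset: "A \<in> atoms BB \<Longrightarrow> \<exists>B\<in>BB. A \<subseteq> B"
  unfolding atoms_def by blast

lemma Union_atoms_subset: "B \<in> BB \<Longrightarrow> B = \<Union>{A \<in> atoms BB. A \<subseteq> B}"
  unfolding atoms_def by blast

lemma finite_disjoint_refinement:
  fixes BB :: "'a set set"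
  assumes "finite BB" "BB \<subseteq> sets N"
  obtains n and A :: "nat \<Rightarrow> 'a set" where
    "\<And>i. i < n \<Longrightarrow> A i \<in> sets N" "disjoint_family_on A {..<n}"
    "\<And>i. i < n \<Longrightarrow> \<exists>B\<in>BB. A i \<subseteq> B"
    "\<And>B. B \<in> BB \<Longrightarrow> B = (\<Union>i\<in>{i. i < n \<and> A i \<subseteq> B}. A i)"
proof -
  define n where "n = card (atoms BB)"
  obtain A where A: "bij_betw A {..<n} (atoms BB)"
    using ex_bij_betw_nat_finite[OF finite_atoms[OF assms(1)]] unfolding n_def
    by (auto simp: atLeast0LessThan)
  then have A_image: "A ` {..<n} = atoms BB"
    by (rule bij_betw_imp_surj_on)
  show ?thesis
  proof (rule that[of n A])
    fix i assume "i < n"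
    then have "A i \<in> atoms BB"
      using A_image by blast
    then show "A i \<in> sets N" "\<exists>B\<in>BB. A i \<subseteq> B"
      using atoms_sets[OF assms] atoms_subset by blast+
  next
    show "disjoint_family_on A {..<n}"
      unfolding disjoint_family_on_def
    proof (intro ballI impI)
      fix i j assume "i \<in> {..<n}" "j \<in> {..<n}" "i \<noteq> j"
      then have "A i \<noteq> A j" "A i \<in> atoms BB" "A j \<in> atoms BB"
        using inj_onD[OF bij_betw_imp_inj_on[OF A]] A_image by auto
      then show "A i \<inter> A j = {}"
        using disjoint_atoms[of BB] unfolding disjoint_def by blast
    qed
  next
    fix B assume "B \<in> BB"
    have "{C \<in> atoms BB. C \<subseteq> B} = A ` {i. i < n \<and> A i \<subseteq> B}"
      unfolding A_image[symmetric] by blast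
    then show "B = (\<Union>i\<in>{i. i < n \<and> A i \<subseteq> B}. A i)"
      using Union_atoms_subset[OF \<open>B \<in> BB\<close>] by (simp only:)
  qed
qed

lemma card_Diff_Int_refinement:
  fixes n :: nat
  assumes disj: "disjoint_family_on A {..<n}" and cover: "B = (\<Union>i\<in>{i. i < n \<and> A i \<subseteq> B}. A i)"
    and finite: "finite (Q \<inter> B)"
  shows "card ((Q - Z) \<inter> B) = (\<Sum>i\<in>{i. i < n \<and> A i \<subseteq> B}. card (Q \<inter> (A i - Z)))"
proof -
  let ?I = "{i. i < n \<and> A i \<subseteq> B}"
  have "(\<Union>i\<in>?I. Q \<inter> (A i - Z)) = (Q - Z) \<inter> (\<Union>i\<in>?I. A i)"
    by blast
  also have "\<dots> = (Q - Z) \<inter> B"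
    by (simp only: cover[symmetric])
  finally have "card ((Q - Z) \<inter> B) = card (\<Union>i\<in>?I. Q \<inter> (A i - Z))"
    by simp
  also have "\<dots> = (\<Sum>i\<in>?I. card (Q \<inter> (A i - Z)))"
  proof (rule card_UN_disjoint)
    show "finite ?I"
      by (rule finite_subset[of _ "{..<n}"]) auto
    show "\<forall>i\<in>?I. finite (Q \<inter> (A i - Z))"
    proof
      fix i assume "i \<in> ?I"
      then have "Q \<inter> (A i - Z) \<subseteq> Q \<inter> B"
        by blast
      then show "finite (Q \<inter> (A i - Z))"
        using finite by (rule finite_subset)
    qed
    show "\<forall>i\<in>?I. \<forall>j\<in>?I. i \<noteq> j \<longrightarrow> Q \<inter> (A i - Z) \<inter> (Q \<inter> (A j - Z)) = {}"
      using disj unfolding disjoint_family_on_def by blast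
  qed
  finally show ?thesis .
qed

section \<open>Independence and Dynkin arguments\<close>

lemma Int_stable_vimage:
  assumes "Int_stable E"
  shows "Int_stable {f -` A \<inter> \<Omega> | A. A \<in> E}"
proof (rule Int_stableI)
  fix a b assume "a \<in> {f -` A \<inter> \<Omega> | A. A \<in> E}" "b \<in> {f -` A \<inter> \<Omega> | A. A \<in> E}"
  then obtain A B where "A \<in> E" "B \<in> E" "a = f -` A \<inter> \<Omega>" "b = f -` B \<inter> \<Omega>"
    by blast
  moreover have "A \<inter> B \<in> E"
    using assms \<open>A \<in> E\<close> \<open>B \<in> E\<close> unfolding Int_stable_def by blast
  ultimately show "a \<inter> b \<in> {f -` A \<inter> \<Omega> | A. A \<in> E}"
    by (intro CollectI exI[of _ "A \<inter> B"]) auto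
qed

lemma (in prob_space) indep_var_compose_indep_set:
  assumes indep: "indep_set (sigma_sets (space M) {X -` A \<inter> space M | A. A \<in> sets S})
      (sigma_sets (space M) {Y -` A \<inter> space M | A. A \<in> sets T})"
    and X: "X \<in> measurable M S" and Y: "Y \<in> measurable M T"
    and f: "f \<in> measurable S N" and g: "g \<in> measurable T N"
  shows "indep_var N (\<lambda>\<omega>. f (X \<omega>)) N (\<lambda>\<omega>. g (Y \<omega>))"
proof -
  have generated_mono: "sigma_sets (space M) {(\<lambda>\<omega>. h (V \<omega>)) -` A \<inter> space M | A. A \<in> sets N}
      \<subseteq> sigma_sets (space M) {V -` A \<inter> space M | A. A \<in> sets K}"
    if V: "V \<in> measurable M K" and h: "h \<in> measurable K N" for V h K
  proof (rule sigma_sets_subseteq, safe)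
    fix A assume "A \<in> sets N"
    then have "h -` A \<inter> space K \<in> sets K"
      using h by (rule measurable_sets[rotated])
    moreover have "(\<lambda>\<omega>. h (V \<omega>)) -` A \<inter> space M = V -` (h -` A \<inter> space K) \<inter> space M"
      using measurable_space[OF V] by auto
    ultimately show "\<exists>B. (\<lambda>\<omega>. h (V \<omega>)) -` A \<inter> space M = V -` B \<inter> space M \<and> B \<in> sets K"
      by blast
  qed
  show ?thesis
    using indep generated_mono[OF X f] generated_mono[OF Y g] measurable_compose[OF X f]
      measurable_compose[OF Y g]
    unfolding indep_var_eq indep_sets2_eq by blast
qed

lemma (in prob_space) vimage_Int_events:
  assumes "P \<in> measurable M N" "A \<in> sets N" "K \<in> events"
  shows "P -` A \<inter> K \<in> events"
proof -
  have "P -` A \<inter> K = (P -` A \<inter> space M) \<inter> K"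
    using sets.sets_into_space[OF assms(3)] by blast
  also have "\<dots> \<in> events"
    using measurable_sets[OF assms(1,2)] assms(3) by (rule sets.Int)
  finally show ?thesis .
qed

lemma (in prob_space) prob_vimage_eq_from_rectangles:
  assumes P: "P \<in> measurable M (M1 \<Otimes>\<^sub>M M2)" and K1: "K1 \<in> events" and K2: "K2 \<in> events"
    and rect: "\<And>A B. A \<in> sets M1 \<Longrightarrow> B \<in> sets M2 \<Longrightarrow>
      prob (P -` (A \<times> B) \<inter> K1) = c * prob (P -` (A \<times> B) \<inter> K2)"
    and E: "E \<in> sets (M1 \<Otimes>\<^sub>M M2)"
  shows "prob (P -` E \<inter> K1) = c * prob (P -` E \<inter> K2)"
proof -
  let ?\<Omega> = "space M1 \<times> space M2"
  let ?G = "{a \<times> b | a b. a \<in> sets M1 \<and> b \<in> sets M2}"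
  have vimage_events: "P -` A \<inter> K \<in> events" if "A \<in> sigma_sets ?\<Omega> ?G" "K \<in> events" for A K
    using vimage_Int_events[OF P _ that(2)] that(1) unfolding sets_pair_measure .
  have vimage_space: "P -` ?\<Omega> \<inter> K = K" if "K \<in> events" for K
    using measurable_space[OF P] sets.sets_into_space[OF that] by (auto simp: space_pair_measure)
  from Int_stable_pair_measure_generator pair_measure_closed E[unfolded sets_pair_measure]
  show ?thesis
  proof (induct rule: sigma_sets_induct_disjoint)
    case (basic A)
    then obtain a b where "A = a \<times> b" "a \<in> sets M1" "b \<in> sets M2"
      by blast
    then show ?case
      using rect by simp
  next
    case empty
    show ?case by simp
  next
    case (compl A)
    have Diff: "prob (P -` (?\<Omega> - A) \<inter> K) = prob K - prob (P -` A \<inter> K)" if "K \<in> events" for K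
    proof -
      have "P -` (?\<Omega> - A) \<inter> K = K - (P -` A \<inter> K)"
        using vimage_space[OF that] by blast
      then show ?thesis
        using vimage_events[OF compl(1) that] that by (simp add: finite_measure_Diff)
    qed
    have "prob K1 = c * prob K2"
      using rect[OF sets.top sets.top] vimage_space[OF K1] vimage_space[OF K2] by simp
    then show ?case
      using Diff[OF K1] Diff[OF K2] compl(2) by (simp add: right_diff_distrib)
  next
    case (union A)
    have sums: "(\<lambda>i. prob (P -` A i \<inter> K)) sums prob (P -` (\<Union>i. A i) \<inter> K)" if "K \<in> events" for K
    proof -
      have "range (\<lambda>i. P -` A i \<inter> K) \<subseteq> events"
        using union(2) vimage_events[OF _ that] by blast
      moreover have "disjoint_family (\<lambda>i. P -` A i \<inter> K)"
        using union(1) unfolding disjoint_family_on_def by blast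
      ultimately have "(\<lambda>i. prob (P -` A i \<inter> K)) sums prob (\<Union>i. P -` A i \<inter> K)"
        by (rule finite_measure_UNION)
      moreover have "(\<Union>i. P -` A i \<inter> K) = P -` (\<Union>i. A i) \<inter> K"
        by blast
      ultimately show ?thesis
        by simp
    qed
    have "(\<lambda>i. prob (P -` A i \<inter> K1)) sums (c * prob (P -` (\<Union>i. A i) \<inter> K2))"
      using sums_mult[OF sums[OF K2], of c] union(3) by simp
    then show ?case
      using sums_unique2[OF sums[OF K1]] by simp
  qed
qed

section \<open>Configuration spaces\<close>

definition count_cylinders :: "('a::euclidean_space) set set set" where
  "count_cylinders = {{Q. \<forall>(B, k)\<in>F. card (Q \<inter> B) = k} | F. finite F \<and>
      (\<forall>(B, k)\<in>F. B \<in> sets borel \<and> emeasure lborel B < \<infinity>)}"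

definition cylinder_config_space :: "('a::euclidean_space) set measure" where
  "cylinder_config_space = sigma UNIV count_cylinders"

lemma sets_cylinder_config_space: "sets cylinder_config_space = sigma_sets UNIV count_cylinders"
  unfolding cylinder_config_space_def by (rule sets_measure_of) auto

lemma space_cylinder_config_space [simp]: "space cylinder_config_space = UNIV"
  unfolding cylinder_config_space_def by (rule space_measure_of) auto

lemma count_cylindersI:
  assumes "finite F" "\<And>B k. (B, k) \<in> F \<Longrightarrow> B \<in> sets borel \<and> emeasure lborel B < \<infinity>"
  shows "{Q. \<forall>(B, k)\<in>F. card (Q \<inter> B) = k} \<in> count_cylinders"
  using assms unfolding count_cylinders_def by blast

lemma count_cylindersE:
  assumes "C \<in> count_cylinders"
  obtains F where "C = {Q. \<forall>(B, k)\<in>F. card (Q \<inter> B) = k}" "finite F"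
    "\<And>B k. (B, k) \<in> F \<Longrightarrow> B \<in> sets borel \<and> emeasure lborel B < \<infinity>"
  using assms unfolding count_cylinders_def by blast

lemma Int_stable_count_cylinders: "Int_stable count_cylinders"
proof (rule Int_stableI)
  fix C D :: "'a set set" assume "C \<in> count_cylinders" "D \<in> count_cylinders"
  obtain F where F: "C = {Q. \<forall>(B, k)\<in>F. card (Q \<inter> B) = k}" "finite F"
      "\<And>B k. (B, k) \<in> F \<Longrightarrow> B \<in> sets borel \<and> emeasure lborel B < \<infinity>"
    using \<open>C \<in> count_cylinders\<close> by (rule count_cylindersE) blast
  obtain G where G: "D = {Q. \<forall>(B, k)\<in>G. card (Q \<inter> B) = k}" "finite G"
      "\<And>B k. (B, k) \<in> G \<Longrightarrow> B \<in> sets borel \<and> emeasure lborel B < \<infinity>"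
    using \<open>D \<in> count_cylinders\<close> by (rule count_cylindersE) blast
  have "C \<inter> D = {Q. \<forall>(B, k)\<in>F \<union> G. card (Q \<inter> B) = k}"
    unfolding F(1) G(1) ball_Un by (rule Collect_conj_eq[symmetric])
  also have "\<dots> \<in> count_cylinders"
    using F G by (intro count_cylindersI) auto
  finally show "C \<inter> D \<in> count_cylinders" .
qed

lemma measurable_card_Int_cylinder:
  assumes "B \<in> sets borel" "emeasure lborel B < \<infinity>"
  shows "(\<lambda>Q. card (Q \<inter> B)) \<in> measurable cylinder_config_space (count_space UNIV)"
  unfolding measurable_count_space_eq2_countable
proof (intro conjI ballI)
  fix k :: nat
  have "(\<lambda>Q. card (Q \<inter> B)) -` {k} \<inter> space cylinder_config_space
      = {Q. \<forall>(B', k')\<in>{(B, k)}. card (Q \<inter> B') = k'}"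
    by auto
  also have "\<dots> \<in> count_cylinders"
    using assms by (intro count_cylindersI) auto
  finally show "(\<lambda>Q. card (Q \<inter> B)) -` {k} \<inter> space cylinder_config_space \<in> sets cylinder_config_space"
    unfolding sets_cylinder_config_space by (rule sigma_sets.Basic)
qed auto

lemma sets_config_space:
  "sets config_space = sigma_sets UNIV {{P. card (P \<inter> B) = k} | B k. B \<in> sets borel}"
  unfolding config_space_def by (rule sets_measure_of) auto

lemma space_config_space [simp]: "space config_space = UNIV"
  unfolding config_space_def by (rule space_measure_of) auto

lemma config_count_event: "B \<in> sets borel \<Longrightarrow> {P. card (P \<inter> B) = k} \<in> sets config_space"
  unfolding sets_config_space by (intro sigma_sets.Basic) blast

lemma measurable_card_Int_config:
  assumes "B \<in> sets borel"
  shows "(\<lambda>Q. card (Q \<inter> B)) \<in> measurable config_space (count_space UNIV)"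
  unfolding measurable_count_space_eq2_countable
proof (intro conjI ballI)
  fix k :: nat
  have "(\<lambda>Q. card (Q \<inter> B)) -` {k} \<inter> space config_space = {P. card (P \<inter> B) = k}"
    by auto
  then show "(\<lambda>Q. card (Q \<inter> B)) -` {k} \<inter> space config_space \<in> sets config_space"
    using config_count_event[OF assms] by simp
qed auto

lemma measurable_Diff_config:
  assumes "Z \<in> sets borel"
  shows "(\<lambda>P. P - Z) \<in> measurable config_space cylinder_config_space"
  unfolding cylinder_config_space_def
proof (rule measurable_measure_of)
  fix C :: "'a set set" assume "C \<in> count_cylinders"
  then obtain F where F: "C = {Q. \<forall>(B, k)\<in>F. card (Q \<inter> B) = k}" "finite F"
      "\<And>B k. (B, k) \<in> F \<Longrightarrow> B \<in> sets borel \<and> emeasure lborel B < \<infinity>"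
    by (rule count_cylindersE) blast
  have Diff_Int: "(P - Z) \<inter> B = P \<inter> (B - Z)" for P B :: "'a set"
    by blast
  have "(\<lambda>P. P - Z) -` C \<inter> space config_space
      = {P \<in> space config_space. \<forall>p\<in>F. card (P \<inter> (fst p - Z)) = snd p}"
    unfolding F(1) by (simp add: case_prod_beta Diff_Int)
  also have "\<dots> \<in> sets config_space"
  proof (rule sets.sets_Collect_finite_All[OF _ F(2)])
    fix p assume "p \<in> F"
    then have "fst p - Z \<in> sets borel"
      using F(3)[of "fst p" "snd p"] assms by auto
    then show "{P \<in> space config_space. card (P \<inter> (fst p - Z)) = snd p} \<in> sets config_space"
      using config_count_event by simp
  qed
  finally show "(\<lambda>P. P - Z) -` C \<inter> space config_space \<in> sets config_space" .
qed auto

definition selection_weight :: "'a set set \<Rightarrow> 'a set \<Rightarrow> 'a set \<Rightarrow> 'a set \<Rightarrow> real" where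
  "selection_weight C S B Q = indicator C Q * real (card (Q \<inter> S \<inter> B)) / real (card (Q \<inter> S))"

lemma selection_weight_bounded: "\<bar>selection_weight C S B Q\<bar> \<le> 1"
proof (cases "finite (Q \<inter> S)")
  case True
  then have "card (Q \<inter> S \<inter> B) \<le> card (Q \<inter> S)"
    by (intro card_mono) auto
  then show ?thesis
    unfolding selection_weight_def by (cases "card (Q \<inter> S) = 0") (auto simp: indicator_def)
qed (simp add: selection_weight_def)

lemma measurable_selection_weight:
  assumes "C \<in> sets cylinder_config_space" "S \<in> sets borel" "emeasure lborel S < \<infinity>" "B \<in> sets borel"
  shows "selection_weight C S B \<in> borel_measurable cylinder_config_space"
proof -
  have "emeasure lborel (S \<inter> B) \<le> emeasure lborel S"
    using assms by (intro emeasure_mono) auto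
  then have [measurable]: "(\<lambda>Q. card (Q \<inter> (S \<inter> B))) \<in> measurable cylinder_config_space (count_space UNIV)"
    using assms by (intro measurable_card_Int_cylinder) auto
  have [measurable]: "(\<lambda>Q. card (Q \<inter> S)) \<in> measurable cylinder_config_space (count_space UNIV)"
    using assms by (intro measurable_card_Int_cylinder) auto
  note assms(1) [measurable]
  show ?thesis
    unfolding selection_weight_def by (simp add: Int_assoc) measurable
qed

section \<open>Locally finite configurations and isolation\<close>

definition locally_finite :: "('a::euclidean_space) set \<Rightarrow> bool" where
  "locally_finite Q \<longleftrightarrow> (\<forall>m::nat. finite (Q \<inter> ball 0 (real m)))"

lemma locally_finite_Int_bounded:
  assumes "locally_finite Q" "bounded B"
  shows "finite (Q \<inter> B)"
proof -
  obtain m :: nat where "B \<subseteq> ball 0 (real m)"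
    using bounded_subset_ballD[OF assms(2), of 0] reals_Archimedean2
    by (metis ball_subset_ball_iff less_eq_real_def order_trans)
  then show ?thesis
    using assms(1) unfolding locally_finite_def by (meson Int_mono finite_subset order_refl)
qed

lemma locally_finite_subset: "locally_finite Q \<Longrightarrow> Q' \<subseteq> Q \<Longrightarrow> locally_finite Q'"
  unfolding locally_finite_def by (meson Int_mono finite_subset order_refl)

lemma r_isolated_subset: "r_isolated r Q x \<Longrightarrow> x \<in> Q' \<Longrightarrow> Q' \<subseteq> Q \<Longrightarrow> r_isolated r Q' x"
  unfolding r_isolated_def by blast

lemma r_isolated_iff_card_cball:
  assumes "locally_finite Q" "r \<ge> 0"
  shows "r_isolated r Q x \<longleftrightarrow> x \<in> Q \<and> card (Q \<inter> cball x r) \<le> 1"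
proof
  assume iso: "r_isolated r Q x"
  then have "Q \<inter> cball x r \<subseteq> {x}"
    unfolding r_isolated_def by (auto simp: not_less)
  then show "x \<in> Q \<and> card (Q \<inter> cball x r) \<le> 1"
    using iso card_mono[of "{x}" "Q \<inter> cball x r"] unfolding r_isolated_def by simp
next
  assume x: "x \<in> Q \<and> card (Q \<inter> cball x r) \<le> 1"
  have "finite (Q \<inter> cball x r)"
    using locally_finite_Int_bounded[OF assms(1)] by simp
  then have "\<forall>a\<in>Q \<inter> cball x r. \<forall>b\<in>Q \<inter> cball x r. a = b"
    using x by (simp add: card_le_Suc0_iff_eq)
  moreover have "x \<in> Q \<inter> cball x r"
    using x assms(2) by simp
  ultimately have "y = x" if "y \<in> Q" "dist x y \<le> r" for y
    using that by simp
  then show "r_isolated r Q x"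
    using x unfolding r_isolated_def by (meson not_le)
qed

lemma locally_finite_gap:
  assumes "locally_finite Q"
  obtains d where "0 < d" "\<And>y. y \<in> Q \<Longrightarrow> dist x y < s + d \<Longrightarrow> dist x y \<le> s"
proof -
  define G where "G = {y \<in> Q \<inter> cball x (s + 1). s < dist x y}"
  have "G \<subseteq> Q \<inter> cball x (s + 1)"
    unfolding G_def by blast
  then have "finite G"
    by (rule finite_subset) (use locally_finite_Int_bounded[OF assms] in simp)
  define d where "d = Min (insert 1 ((\<lambda>y. dist x y - s) ` G))"
  show ?thesis
  proof (rule that[of d])
    show "0 < d"
      using \<open>finite G\<close> unfolding d_def by (subst Min_gr_iff) (auto simp: G_def)
    fix y assume y: "y \<in> Q" "dist x y < s + d"
    show "dist x y \<le> s"
    proof (rule ccontr)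
      assume "\<not> dist x y \<le> s"
      moreover have "d \<le> 1"
        using \<open>finite G\<close> unfolding d_def by (intro Min_le) auto
      ultimately have "y \<in> G"
        using y unfolding G_def by simp
      then have "d \<le> dist x y - s"
        using \<open>finite G\<close> unfolding d_def by (intro Min_le) auto
      then show False
        using y(2) by simp
    qed
  qed
qed

text \<open>Quantifying over the centres of a countable dense set turns the condition on the
  closed ball into a countable union of rectangles.\<close>

lemma card_cball_le_iff_dense:
  fixes D :: "'a::euclidean_space set"
  assumes D: "\<And>U. open U \<Longrightarrow> U \<noteq> {} \<Longrightarrow> \<exists>c\<in>D. c \<in> U" and Q: "locally_finite Q"
  shows "card (Q \<inter> cball x s) \<le> m \<longleftrightarrow>
    (\<exists>n. \<exists>c\<in>D. card (Q \<inter> ball c (s + inverse (Suc n))) \<le> m \<and> x \<in> ball c (inverse (Suc n)))"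
proof
  assume "\<exists>n. \<exists>c\<in>D. card (Q \<inter> ball c (s + inverse (Suc n))) \<le> m \<and> x \<in> ball c (inverse (Suc n))"
  then obtain n c where c: "card (Q \<inter> ball c (s + inverse (Suc n))) \<le> m" "x \<in> ball c (inverse (Suc n))"
    by blast
  have "cball x s \<subseteq> ball c (s + inverse (Suc n))"
  proof
    fix y assume "y \<in> cball x s"
    then show "y \<in> ball c (s + inverse (Suc n))"
      using c(2) dist_triangle[of c y x] by simp
  qed
  then have "card (Q \<inter> cball x s) \<le> card (Q \<inter> ball c (s + inverse (Suc n)))"
    using locally_finite_Int_bounded[OF Q] by (intro card_mono) auto
  then show "card (Q \<inter> cball x s) \<le> m"
    using c(1) by simp
next
  assume le_m: "card (Q \<inter> cball x s) \<le> m"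
  obtain d where d: "0 < d" "\<And>y. y \<in> Q \<Longrightarrow> dist x y < s + d \<Longrightarrow> dist x y \<le> s"
    using locally_finite_gap[OF Q] by blast
  obtain n :: nat where n: "inverse (Suc n) < d / 2"
    using reals_Archimedean[of "d / 2"] d(1) by auto
  define e where "e = inverse (real (Suc n))"
  obtain c where c: "c \<in> D" "c \<in> ball x e"
    using D[of "ball x e"] unfolding e_def by auto
  have "Q \<inter> ball c (s + e) \<subseteq> Q \<inter> cball x s"
  proof
    fix y assume y: "y \<in> Q \<inter> ball c (s + e)"
    have "dist x y < s + 2 * e"
      using c(2) y dist_triangle[of x y c] by (simp add: dist_commute)
    moreover have "2 * e < d"
      using n unfolding e_def by simp
    ultimately show "y \<in> Q \<inter> cball x s"
      using y d(2)[of y] by simp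
  qed
  then have "card (Q \<inter> ball c (s + e)) \<le> card (Q \<inter> cball x s)"
    using locally_finite_Int_bounded[OF Q] by (intro card_mono) auto
  then show "\<exists>n. \<exists>c\<in>D. card (Q \<inter> ball c (s + inverse (Suc n))) \<le> m \<and> x \<in> ball c (inverse (Suc n))"
    using le_m c unfolding e_def by (intro exI[of _ n] bexI[of _ c]) (auto simp: dist_commute)
qed

lemma card_cball_le_sets:
  obtains S :: "(('a::euclidean_space) set \<times> 'a) set"
  where "S \<in> sets (cylinder_config_space \<Otimes>\<^sub>M borel)"
    "\<And>Q x. locally_finite Q \<Longrightarrow> (Q, x) \<in> S \<longleftrightarrow> card (Q \<inter> cball x s) \<le> m"
proof -
  obtain D :: "'a set" where D: "countable D" "\<And>U. open U \<Longrightarrow> U \<noteq> {} \<Longrightarrow> \<exists>c\<in>D. c \<in> U"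
    using countable_dense_exists by blast
  define S where "S = (\<Union>n. \<Union>c\<in>D.
      {Q. card (Q \<inter> ball c (s + inverse (Suc n))) \<le> m} \<times> ball c (inverse (Suc n)))"
  have "(\<lambda>Q. card (Q \<inter> ball c t)) -` {..m} \<inter> space cylinder_config_space
      \<in> sets cylinder_config_space" for c :: 'a and t
    by (rule measurable_sets[OF measurable_card_Int_cylinder[OF _ emeasure_bounded_finite]]) auto
  then have "{Q. card (Q \<inter> ball c t) \<le> m} \<in> sets cylinder_config_space" for c :: 'a and t
    by (simp add: vimage_def)
  then have "S \<in> sets (cylinder_config_space \<Otimes>\<^sub>M borel)"
    unfolding S_def using D(1) by (intro sets.countable_UN'' pair_measureI) auto
  moreover have "(Q, x) \<in> S \<longleftrightarrow> card (Q \<inter> cball x s) \<le> m" if "locally_finite Q" for Q x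
    using card_cball_le_iff_dense[OF D(2) that, of x s m] unfolding S_def by blast
  ultimately show ?thesis
    using that by blast
qed

lemma r_isolated_sets:
  assumes "r \<ge> 0"
  obtains S :: "(('a::euclidean_space) set \<times> 'a) set"
  where "S \<in> sets (cylinder_config_space \<Otimes>\<^sub>M borel)"
    "\<And>Q x. locally_finite Q \<Longrightarrow> (Q, x) \<in> S \<longleftrightarrow> r_isolated r Q x"
proof -
  obtain S0 :: "('a set \<times> 'a) set" where S0: "S0 \<in> sets (cylinder_config_space \<Otimes>\<^sub>M borel)"
    "\<And>Q x. locally_finite Q \<Longrightarrow> (Q, x) \<in> S0 \<longleftrightarrow> card (Q \<inter> cball x 0) \<le> 0"
    by (rule card_cball_le_sets[where s=0 and m=0]) blast
  obtain S1 :: "('a set \<times> 'a) set" where S1: "S1 \<in> sets (cylinder_config_space \<Otimes>\<^sub>M borel)"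
    "\<And>Q x. locally_finite Q \<Longrightarrow> (Q, x) \<in> S1 \<longleftrightarrow> card (Q \<inter> cball x r) \<le> 1"
    by (rule card_cball_le_sets[where s=r and m=1]) blast
  show ?thesis
  proof (rule that[of "S1 - S0"])
    show "S1 - S0 \<in> sets (cylinder_config_space \<Otimes>\<^sub>M borel)"
      using S1(1) S0(1) by (rule sets.Diff)
    fix Q :: "'a set" and x :: 'a
    assume Q: "locally_finite Q"
    then show "(Q, x) \<in> S1 - S0 \<longleftrightarrow> r_isolated r Q x"
      using S0(2)[OF Q, of x] S1(2)[OF Q, of x] r_isolated_iff_card_cball[OF Q assms, of x] by auto
  qed
qed

section \<open>The configuration outside a set is independent of the count inside\<close>

locale poisson_process =
  fixes M :: "'w measure" and lam :: real and PP :: "'w \<Rightarrow> ('a::euclidean_space) set"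
  assumes poisson: "poisson_pp M lam PP"
begin

sublocale prob_space M
  using poisson unfolding poisson_pp_def by blast

lemma measurable_PP: "PP \<in> measurable M config_space"
  using poisson unfolding poisson_pp_def by blast

lemma measurable_count: "B \<in> sets borel \<Longrightarrow> (\<lambda>\<omega>. card (PP \<omega> \<inter> B)) \<in> measurable M (count_space UNIV)"
  using measurable_compose[OF measurable_PP measurable_card_Int_config] .

lemma count_event: "B \<in> sets borel \<Longrightarrow> {\<omega> \<in> space M. P (card (PP \<omega> \<inter> B))} \<in> events"
  using measurable_sets[OF measurable_count, of B "{k. P k}"] by (simp add: vimage_def Int_def conj_commute)

lemma measurable_Diff: "Z \<in> sets borel \<Longrightarrow> (\<lambda>\<omega>. PP \<omega> - Z) \<in> measurable M cylinder_config_space"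
  using measurable_compose[OF measurable_PP measurable_Diff_config] .

lemma AE_finite_Int:
  "B \<in> sets borel \<Longrightarrow> emeasure lborel B < \<infinity> \<Longrightarrow> AE \<omega> in M. finite (PP \<omega> \<inter> B)"
  using poisson unfolding poisson_pp_def by auto

lemma prob_count:
  "B \<in> sets borel \<Longrightarrow> emeasure lborel B < \<infinity> \<Longrightarrow>
    prob {\<omega> \<in> space M. card (PP \<omega> \<inter> B) = k}
      = (lam * measure lborel B) ^ k / fact k * exp (- lam * measure lborel B)"
  using poisson unfolding poisson_pp_def by auto

lemma indep_counts:
  fixes I :: "nat set" and B :: "nat \<Rightarrow> 'a set"
  assumes "finite I" "\<And>i. i \<in> I \<Longrightarrow> B i \<in> sets borel \<and> emeasure lborel (B i) < \<infinity>"
    and "disjoint_family_on B I"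
  shows "indep_vars (\<lambda>_. count_space UNIV) (\<lambda>i \<omega>. card (PP \<omega> \<inter> B i)) I"
  using poisson assms unfolding poisson_pp_def by simp

lemma AE_locally_finite: "AE \<omega> in M. locally_finite (PP \<omega>)"
  unfolding locally_finite_def AE_all_countable
  by (intro allI AE_finite_Int emeasure_bounded_finite) auto

lemma cylinder_event_AE_cell_counts:
  assumes C: "C \<in> count_cylinders" and Z: "Z \<in> sets borel"
  obtains n :: nat and cell :: "nat \<Rightarrow> 'a set" and R :: "(nat \<Rightarrow> nat) set" where
    "\<And>i. i < n \<Longrightarrow> cell i \<in> sets borel \<and> emeasure lborel (cell i) < \<infinity> \<and> cell i \<inter> Z = {}"
    "disjoint_family_on cell {..<n}" "R \<in> sets (PiM {..<n} (\<lambda>_. count_space UNIV))"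
    "AE \<omega> in M. PP \<omega> - Z \<in> C \<longleftrightarrow> (\<lambda>i\<in>{..<n}. card (PP \<omega> \<inter> cell i)) \<in> R"
proof -
  obtain F where F: "C = {Q. \<forall>(B, k)\<in>F. card (Q \<inter> B) = k}" "finite F"
      "\<And>B k. (B, k) \<in> F \<Longrightarrow> B \<in> sets borel \<and> emeasure lborel B < \<infinity>"
    using C by (rule count_cylindersE) blast
  have F_sets: "fst ` F \<subseteq> sets borel"
    using F(3) by force
  obtain n and A :: "nat \<Rightarrow> 'a set" where A_sets: "\<And>i. i < n \<Longrightarrow> A i \<in> sets borel"
    and A_disj: "disjoint_family_on A {..<n}" and A_sub: "\<And>i. i < n \<Longrightarrow> \<exists>B\<in>fst ` F. A i \<subseteq> B"
    and A_cover: "\<And>B. B \<in> fst ` F \<Longrightarrow> B = (\<Union>i\<in>{i. i < n \<and> A i \<subseteq> B}. A i)"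
    by (rule finite_disjoint_refinement[OF finite_imageI[OF F(2)] F_sets]) blast
  define cell where "cell i = A i - Z" for i
  define I where "I B = {i. i < n \<and> A i \<subseteq> B}" for B
  define R where "R = {f \<in> space (PiM {..<n} (\<lambda>_. count_space UNIV)).
      \<forall>(B, k)\<in>F. (\<Sum>i\<in>I B. f i) = k}"
  show ?thesis
  proof (rule that[of n cell R])
    fix i assume "i < n"
    then obtain B where B: "B \<in> fst ` F" "A i \<subseteq> B"
      using A_sub by blast
    have "emeasure lborel (cell i) \<le> emeasure lborel B"
      using B F_sets A_sets[OF \<open>i < n\<close>] Z unfolding cell_def by (intro emeasure_mono) auto
    also have "\<dots> < \<infinity>"
      using B(1) F(3) by force
    finally show "cell i \<in> sets borel \<and> emeasure lborel (cell i) < \<infinity> \<and> cell i \<inter> Z = {}"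
      using A_sets[OF \<open>i < n\<close>] Z unfolding cell_def by auto
  next
    show "disjoint_family_on cell {..<n}"
      using A_disj unfolding disjoint_family_on_def cell_def by blast
  next
    show "R \<in> sets (PiM {..<n} (\<lambda>_. count_space UNIV))"
      unfolding R_def I_def using F(2) by measurable
  next
    have "AE \<omega> in M. \<forall>B\<in>fst ` F. finite (PP \<omega> \<inter> B)"
      using F(2,3) by (intro AE_finite_allI AE_finite_Int) force+
    then show "AE \<omega> in M. PP \<omega> - Z \<in> C \<longleftrightarrow> (\<lambda>i\<in>{..<n}. card (PP \<omega> \<inter> cell i)) \<in> R"
    proof eventually_elim
      case (elim \<omega>)
      let ?counts = "\<lambda>i\<in>{..<n}. card (PP \<omega> \<inter> cell i)"
      have "card ((PP \<omega> - Z) \<inter> B) = (\<Sum>i\<in>I B. ?counts i)" if "(B, k) \<in> F" for B k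
      proof -
        have B: "B \<in> fst ` F"
          using that by force
        have "card ((PP \<omega> - Z) \<inter> B) = (\<Sum>i\<in>I B. card (PP \<omega> \<inter> (A i - Z)))"
          unfolding I_def using A_disj A_cover[OF B] bspec[OF elim B] by (rule card_Diff_Int_refinement)
        also have "\<dots> = (\<Sum>i\<in>I B. ?counts i)"
          unfolding cell_def I_def by (intro sum.cong) auto
        finally show ?thesis .
      qed
      moreover have "?counts \<in> space (PiM {..<n} (\<lambda>_. count_space UNIV))"
        by (simp add: space_PiM)
      ultimately show ?case
        unfolding F(1) R_def by auto
    qed
  qed
qed

lemma prob_cylinder_Int_count:
  assumes C: "C \<in> count_cylinders" and Z: "Z \<in> sets borel" "emeasure lborel Z < \<infinity>"
  shows "prob ({\<omega> \<in> space M. PP \<omega> - Z \<in> C} \<inter> {\<omega> \<in> space M. card (PP \<omega> \<inter> Z) \<in> K})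
       = prob {\<omega> \<in> space M. PP \<omega> - Z \<in> C} * prob {\<omega> \<in> space M. card (PP \<omega> \<inter> Z) \<in> K}"
proof -
  obtain n :: nat and cell :: "nat \<Rightarrow> 'a set" and R :: "(nat \<Rightarrow> nat) set" where
    cell: "\<And>i. i < n \<Longrightarrow> cell i \<in> sets borel \<and> emeasure lborel (cell i) < \<infinity> \<and> cell i \<inter> Z = {}"
    and disj: "disjoint_family_on cell {..<n}" and R: "R \<in> sets (PiM {..<n} (\<lambda>_. count_space UNIV))"
    and AE_C: "AE \<omega> in M. PP \<omega> - Z \<in> C \<longleftrightarrow> (\<lambda>i\<in>{..<n}. card (PP \<omega> \<inter> cell i)) \<in> R"
    using cylinder_event_AE_cell_counts[OF C Z(1)] by blast
  define cell' where "cell' i = (if i < n then cell i else Z)" for i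
  define counts where "counts I \<omega> = (\<lambda>i\<in>I. card (PP \<omega> \<inter> cell' i))" for I \<omega>
  have "disjoint_family_on cell' {..n}"
    using disj cell unfolding disjoint_family_on_def cell'_def by (auto simp: Int_commute)
  moreover have "cell' i \<in> sets borel \<and> emeasure lborel (cell' i) < \<infinity>" for i
    using cell Z by (auto simp: cell'_def)
  ultimately have "indep_vars (\<lambda>_. count_space UNIV) (\<lambda>i \<omega>. card (PP \<omega> \<inter> cell' i)) {..n}"
    by (intro indep_counts) auto
  then have indep: "indep_var (PiM {..<n} (\<lambda>_. count_space UNIV)) (counts {..<n})
      (PiM {n} (\<lambda>_. count_space UNIV)) (counts {n})"
    unfolding counts_def by (rule indep_var_restrict) auto
  define R' where "R' = {f \<in> space (PiM {n} (\<lambda>_. count_space UNIV)). f n \<in> K}"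
  have R': "R' \<in> sets (PiM {n} (\<lambda>_. count_space UNIV))"
    unfolding R'_def by measurable
  let ?C = "{\<omega> \<in> space M. PP \<omega> - Z \<in> C}" and ?K = "{\<omega> \<in> space M. card (PP \<omega> \<inter> Z) \<in> K}"
  let ?R = "counts {..<n} -` R \<inter> space M"
  have "counts {..<n} \<omega> = (\<lambda>i\<in>{..<n}. card (PP \<omega> \<inter> cell i))" for \<omega>
    unfolding counts_def cell'_def by (auto simp: fun_eq_iff)
  then have AE_R: "AE \<omega> in M. \<omega> \<in> ?C \<longleftrightarrow> \<omega> \<in> ?R"
    using AE_C by auto
  have K_eq: "?K = counts {n} -` R' \<inter> space M"
    unfolding R'_def counts_def cell'_def by (auto simp: space_PiM)
  have C_sets: "C \<in> sets cylinder_config_space"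
    using C unfolding sets_cylinder_config_space by (rule sigma_sets.Basic)
  have events: "?C \<in> events" "?K \<in> events" "?R \<in> events"
    using measurable_sets[OF measurable_Diff[OF Z(1)] C_sets] count_event[OF Z(1)]
      measurable_sets[OF indep_var_rv1[OF indep] R]
    by (simp_all add: vimage_def Int_def conj_commute)
  have "prob (?C \<inter> ?K) = prob (?R \<inter> ?K)"
    using AE_R events by (intro measure_eq_AE) auto
  also have "?R \<inter> ?K = (\<lambda>\<omega>. (counts {..<n} \<omega>, counts {n} \<omega>)) -` (R \<times> R') \<inter> space M"
    unfolding K_eq by auto
  also have "prob \<dots> = prob ?R * prob (counts {n} -` R' \<inter> space M)"
    by (rule indep_varD[OF indep R R'])
  also have "prob ?R = prob ?C"
    using AE_R events by (intro measure_eq_AE) auto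
  finally show ?thesis
    unfolding K_eq .
qed

lemma indep_set_Diff_count:
  assumes Z: "Z \<in> sets borel" "emeasure lborel Z < \<infinity>"
  shows "indep_set
    (sigma_sets (space M) {(\<lambda>\<omega>. PP \<omega> - Z) -` A \<inter> space M | A. A \<in> sets cylinder_config_space})
    (sigma_sets (space M) {(\<lambda>\<omega>. card (PP \<omega> \<inter> Z)) -` A \<inter> space M | A. A \<in> sets (count_space UNIV)})"
proof -
  define Y where "Y = (\<lambda>\<omega>. PP \<omega> - Z)"
  define N where "N = (\<lambda>\<omega>. card (PP \<omega> \<inter> Z))"
  define G where "G = {Y -` C \<inter> space M | C. C \<in> count_cylinders}"
  define H where "H = {N -` K \<inter> space M | K. K \<in> sets (count_space UNIV)}"
  have Y: "Y \<in> measurable M cylinder_config_space"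
    unfolding Y_def using measurable_Diff[OF Z(1)] .
  have N: "N \<in> measurable M (count_space UNIV)"
    unfolding N_def using measurable_count[OF Z(1)] .
  have "indep_set G H"
    unfolding indep_sets2_eq
  proof (intro conjI ballI)
    show "G \<subseteq> events"
      using measurable_sets[OF Y] unfolding G_def sets_cylinder_config_space by (blast intro: sigma_sets.Basic)
    show "H \<subseteq> events"
      using measurable_sets[OF N] unfolding H_def by blast
    fix a b assume "a \<in> G" "b \<in> H"
    then obtain C K where "C \<in> count_cylinders"
        "a = {\<omega> \<in> space M. PP \<omega> - Z \<in> C}" "b = {\<omega> \<in> space M. card (PP \<omega> \<inter> Z) \<in> K}"
      unfolding G_def H_def Y_def N_def by blast
    then show "prob (a \<inter> b) = prob a * prob b"
      using prob_cylinder_Int_count Z by simp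
  qed
  moreover have "Int_stable G"
    unfolding G_def by (rule Int_stable_vimage[OF Int_stable_count_cylinders])
  moreover have "Int_stable H"
    unfolding H_def by (rule Int_stable_vimage) (simp add: Int_stable_def)
  ultimately have "indep_set (sigma_sets (space M) G) (sigma_sets (space M) H)"
    by (rule indep_set_sigma_sets)
  moreover have "{Y -` A \<inter> space M | A. A \<in> sets cylinder_config_space} = sigma_sets (space M) G"
    unfolding G_def sets_cylinder_config_space
    by (rule sigma_sets_vimage_commute) (use measurable_space[OF Y] in auto)
  then have "sigma_sets (space M) {Y -` A \<inter> space M | A. A \<in> sets cylinder_config_space}
      = sigma_sets (space M) G"
    using sigma_sets_sigma_sets_eq[of G "space M"] unfolding G_def by auto
  ultimately show ?thesis
    unfolding Y_def N_def H_def by simp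
qed

end

section \<open>The uniformly selected point\<close>

locale poisson_selection = poisson_process M lam PP
  for M :: "'w measure" and lam :: real and PP :: "'w \<Rightarrow> ('a::euclidean_space) set" +
  fixes S Z :: "'a set" and X :: "'w \<Rightarrow> 'a"
  assumes uniform: "uniform_selection M PP S X"
    and S_sets: "S \<in> sets borel" and S_finite: "emeasure lborel S < \<infinity>"
    and Z_sets: "Z \<in> sets borel" and Z_finite: "emeasure lborel Z < \<infinity>" and Z_disjoint: "Z \<inter> S = {}"
begin

definition nonempty :: "'w set" where
  "nonempty = {\<omega> \<in> space M. PP \<omega> \<inter> S \<noteq> {}}"

definition avoiding :: "'w set" where
  "avoiding = {\<omega> \<in> space M. card (PP \<omega> \<inter> Z) = 0}"

definition outer_pair :: "'w \<Rightarrow> 'a set \<times> 'a" where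
  "outer_pair \<omega> = (PP \<omega> - Z, X \<omega>)"

lemma measurable_X: "X \<in> borel_measurable M"
  using uniform unfolding uniform_selection_def by blast

lemma X_in: "\<omega> \<in> space M \<Longrightarrow> PP \<omega> \<inter> S \<noteq> {} \<Longrightarrow> X \<omega> \<in> PP \<omega> \<inter> S"
  using uniform unfolding uniform_selection_def by blast

lemma prob_selection:
  "C \<in> sets config_space \<Longrightarrow> B \<in> sets borel \<Longrightarrow>
    prob {\<omega> \<in> space M. PP \<omega> \<in> C \<and> PP \<omega> \<inter> S \<noteq> {} \<and> X \<omega> \<in> B} = (\<integral>\<omega>. selection_weight C S B (PP \<omega>) \<partial>M)"
  using uniform unfolding uniform_selection_def selection_weight_def by blast

lemma measurable_outer_pair: "outer_pair \<in> measurable M (cylinder_config_space \<Otimes>\<^sub>M borel)"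
  unfolding outer_pair_def using measurable_Diff[OF Z_sets] measurable_X by (rule measurable_Pair)

lemma avoiding_event: "avoiding \<in> events"
  unfolding avoiding_def using count_event[OF Z_sets] .

lemma prob_avoiding: "prob avoiding = exp (- lam * measure lborel Z)"
  unfolding avoiding_def using prob_count[OF Z_sets Z_finite, of 0] by simp

lemma prob_nonempty: "prob nonempty = 1 - exp (- lam * measure lborel S)"
proof -
  let ?E0 = "{\<omega> \<in> space M. card (PP \<omega> \<inter> S) = 0}"
  have E0: "?E0 \<in> events"
    using count_event[OF S_sets] .
  have "UNIV \<in> sets (config_space :: 'a set measure)"
    using sets.top[of config_space] by simp
  then have "prob nonempty = (\<integral>\<omega>. selection_weight UNIV S UNIV (PP \<omega>) \<partial>M)"
    using prob_selection[of UNIV UNIV] unfolding nonempty_def by simp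
  also have "\<dots> = (\<integral>\<omega>. indicator (space M - ?E0) \<omega> \<partial>M)"
    by (intro Bochner_Integration.integral_cong) (auto simp: selection_weight_def indicator_def)
  also have "\<dots> = 1 - prob ?E0"
    using prob_compl[OF E0] by (simp add: Int_absorb2)
  finally show ?thesis
    using prob_count[OF S_sets S_finite, of 0] by simp
qed

text \<open>The event that the selection exists need not be measurable a priori (the configuration
  space only sees cardinalities, and \<open>PP \<omega> \<inter> S\<close> may be infinite); it is, because
  the selection property assigns it positive probability.\<close>

lemma nonempty_event:
  assumes "lam > 0" "emeasure lborel S > 0"
  shows "nonempty \<in> events"
proof (rule ccontr)
  assume "nonempty \<notin> events"
  then have "prob nonempty = 0"
    by (rule measure_notin_sets)
  moreover have "emeasure lborel S = ennreal (measure lborel S)"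
    using S_finite by (intro emeasure_eq_ennreal_measure) auto
  then have "measure lborel S > 0"
    using assms(2) by simp
  ultimately show False
    using prob_nonempty assms(1) by simp
qed

lemma prob_rectangle_avoiding:
  assumes A: "A \<in> sets cylinder_config_space" and B: "B \<in> sets borel"
  shows "prob (outer_pair -` (A \<times> B) \<inter> (nonempty \<inter> avoiding))
    = prob avoiding * prob (outer_pair -` (A \<times> B) \<inter> nonempty)"
proof -
  define C where "C = (\<lambda>Q. Q - Z) -` A"
  have C: "C \<in> sets config_space"
    using measurable_sets[OF measurable_Diff_config[OF Z_sets] A] unfolding C_def by simp
  then have C_avoid: "C \<inter> {Q. card (Q \<inter> Z) = 0} \<in> sets config_space"
    using config_count_event[OF Z_sets] by auto
  have weight_Diff: "selection_weight A S B (Q - Z) = selection_weight C S B Q" for Q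
  proof -
    have "(Q - Z) \<inter> S = Q \<inter> S"
      using Z_disjoint by blast
    then show ?thesis
      unfolding selection_weight_def C_def by (simp add: Int_assoc indicator_def)
  qed
  define \<phi> where "\<phi> k = (indicator {0} k :: real)" for k :: nat
  have indep: "indep_var borel (\<lambda>\<omega>. selection_weight A S B (PP \<omega> - Z)) borel (\<lambda>\<omega>. \<phi> (card (PP \<omega> \<inter> Z)))"
    using measurable_selection_weight[OF A S_sets S_finite B]
    by (intro indep_var_compose_indep_set[OF indep_set_Diff_count[OF Z_sets Z_finite]
        measurable_Diff[OF Z_sets] measurable_count[OF Z_sets]]) auto
  have integrable: "integrable M (\<lambda>\<omega>. selection_weight A S B (PP \<omega> - Z))"
    "integrable M (\<lambda>\<omega>. \<phi> (card (PP \<omega> \<inter> Z)))"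
    using indep_var_rv1[OF indep] indep_var_rv2[OF indep]
    by (auto intro!: integrable_const_bound[where B=1] AE_I2 selection_weight_bounded simp: \<phi>_def)
  have "prob (outer_pair -` (A \<times> B) \<inter> (nonempty \<inter> avoiding))
      = prob {\<omega> \<in> space M. PP \<omega> \<in> C \<inter> {Q. card (Q \<inter> Z) = 0} \<and> PP \<omega> \<inter> S \<noteq> {} \<and> X \<omega> \<in> B}"
    unfolding outer_pair_def nonempty_def avoiding_def C_def by (intro arg_cong[where f=prob]) auto
  also have "\<dots> = (\<integral>\<omega>. selection_weight A S B (PP \<omega> - Z) * \<phi> (card (PP \<omega> \<inter> Z)) \<partial>M)"
    unfolding prob_selection[OF C_avoid B] weight_Diff
    by (intro Bochner_Integration.integral_cong) (auto simp: selection_weight_def \<phi>_def indicator_def)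
  also have "\<dots> = (\<integral>\<omega>. selection_weight C S B (PP \<omega>) \<partial>M) * (\<integral>\<omega>. \<phi> (card (PP \<omega> \<inter> Z)) \<partial>M)"
    using indep_var_lebesgue_integral[OF indep integrable] by (simp add: weight_Diff)
  also have "(\<integral>\<omega>. \<phi> (card (PP \<omega> \<inter> Z)) \<partial>M) = (\<integral>\<omega>. indicator avoiding \<omega> \<partial>M)"
    by (intro Bochner_Integration.integral_cong) (auto simp: \<phi>_def avoiding_def indicator_def)
  also have "\<dots> = prob avoiding"
    using sets.sets_into_space[OF avoiding_event] by (simp add: Int_absorb2)
  also have "(\<integral>\<omega>. selection_weight C S B (PP \<omega>) \<partial>M)
      = prob {\<omega> \<in> space M. PP \<omega> \<in> C \<and> PP \<omega> \<inter> S \<noteq> {} \<and> X \<omega> \<in> B}"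
    by (rule prob_selection[OF C B, symmetric])
  also have "\<dots> = prob (outer_pair -` (A \<times> B) \<inter> nonempty)"
    unfolding outer_pair_def nonempty_def C_def by (intro arg_cong[where f=prob]) auto
  finally show ?thesis
    by simp
qed

lemma prob_outer_pair_avoiding:
  assumes "nonempty \<in> events" "E \<in> sets (cylinder_config_space \<Otimes>\<^sub>M borel)"
  shows "prob (outer_pair -` E \<inter> nonempty \<inter> avoiding) = prob avoiding * prob (outer_pair -` E \<inter> nonempty)"
  using assms avoiding_event
  by (subst Int_assoc, intro prob_vimage_eq_from_rectangles[OF measurable_outer_pair _ _ prob_rectangle_avoiding])
    auto

lemma AE_isolated_iff_outer_pair:
  assumes DS: "\<And>Q x. locally_finite Q \<Longrightarrow> (Q, x) \<in> DS \<longleftrightarrow> r_isolated r Q x"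
  shows "AE \<omega> in M. \<omega> \<in> avoiding \<longrightarrow> (r_isolated r (PP \<omega>) (X \<omega>) \<longleftrightarrow> outer_pair \<omega> \<in> DS)"
  using AE_locally_finite AE_finite_Int[OF Z_sets Z_finite]
proof eventually_elim
  case (elim \<omega>)
  show ?case
  proof
    assume "\<omega> \<in> avoiding"
    then have "PP \<omega> - Z = PP \<omega>"
      using elim(2) unfolding avoiding_def by auto
    then show "r_isolated r (PP \<omega>) (X \<omega>) \<longleftrightarrow> outer_pair \<omega> \<in> DS"
      using DS[OF elim(1)] unfolding outer_pair_def by simp
  qed
qed

lemma AE_isolated_imp_outer_pair:
  assumes DS: "\<And>Q x. locally_finite Q \<Longrightarrow> (Q, x) \<in> DS \<longleftrightarrow> r_isolated r Q x"
  shows "AE \<omega> in M. \<omega> \<in> nonempty \<longrightarrow> r_isolated r (PP \<omega>) (X \<omega>) \<longrightarrow> outer_pair \<omega> \<in> DS"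
  using AE_locally_finite
proof eventually_elim
  case (elim \<omega>)
  show ?case
  proof (intro impI)
    assume "\<omega> \<in> nonempty" and iso: "r_isolated r (PP \<omega>) (X \<omega>)"
    then have "X \<omega> \<in> PP \<omega> - Z"
      using X_in[of \<omega>] Z_disjoint unfolding nonempty_def by blast
    then have "r_isolated r (PP \<omega> - Z) (X \<omega>)"
      using r_isolated_subset[OF iso, of "PP \<omega> - Z"] by blast
    moreover have "locally_finite (PP \<omega> - Z)"
      using locally_finite_subset[OF elim, of "PP \<omega> - Z"] by blast
    ultimately show "outer_pair \<omega> \<in> DS"
      using DS unfolding outer_pair_def by blast
  qed
qed

lemma prob_isolated_avoiding:
  assumes nonempty: "nonempty \<in> events" and "r \<ge> 0"
  shows "prob avoiding * prob {\<omega> \<in> space M. PP \<omega> \<inter> S \<noteq> {} \<and> r_isolated r (PP \<omega>) (X \<omega>)}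
    \<le> prob {\<omega> \<in> space M. PP \<omega> \<inter> S \<noteq> {} \<and> r_isolated r (PP \<omega>) (X \<omega>) \<and> card (PP \<omega> \<inter> Z) = 0}"
proof -
  let ?I = "{\<omega> \<in> space M. PP \<omega> \<inter> S \<noteq> {} \<and> r_isolated r (PP \<omega>) (X \<omega>)}"
  obtain DS :: "('a set \<times> 'a) set" where DS: "DS \<in> sets (cylinder_config_space \<Otimes>\<^sub>M borel)"
    "\<And>Q x. locally_finite Q \<Longrightarrow> (Q, x) \<in> DS \<longleftrightarrow> r_isolated r Q x"
    using r_isolated_sets[OF assms(2)] by blast
  let ?T = "outer_pair -` DS \<inter> nonempty"
  have "outer_pair -` DS \<inter> space M \<inter> nonempty \<in> events"
    using measurable_sets[OF measurable_outer_pair DS(1)] nonempty by (rule sets.Int)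
  moreover have "outer_pair -` DS \<inter> space M \<inter> nonempty = ?T"
    using sets.sets_into_space[OF nonempty] by blast
  ultimately have T: "?T \<in> events"
    by simp
  then have T_avoiding: "?T \<inter> avoiding \<in> events"
    using avoiding_event by (rule sets.Int)
  show ?thesis
  proof (cases "?I \<in> events")
    case False
    then show ?thesis
      by (simp add: measure_notin_sets)
  next
    case True
    have "AE \<omega> in M. \<omega> \<in> avoiding \<longrightarrow> (r_isolated r (PP \<omega>) (X \<omega>) \<longleftrightarrow> outer_pair \<omega> \<in> DS)"
      using DS(2) by (rule AE_isolated_iff_outer_pair)
    then have "AE \<omega> in M. \<omega> \<in> ?I \<inter> avoiding \<longleftrightarrow> \<omega> \<in> ?T \<inter> avoiding"
    proof eventually_elim
      case (elim \<omega>)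
      then show ?case
        by (auto simp: nonempty_def avoiding_def)
    qed
    then have "prob (?I \<inter> avoiding) = prob (?T \<inter> avoiding)"
      using True avoiding_event T_avoiding by (intro measure_eq_AE) auto
    also have "\<dots> = prob avoiding * prob ?T"
      by (rule prob_outer_pair_avoiding[OF nonempty DS(1)])
    finally have "prob (?I \<inter> avoiding) = prob avoiding * prob ?T" .
    moreover have "AE \<omega> in M. \<omega> \<in> nonempty \<longrightarrow> r_isolated r (PP \<omega>) (X \<omega>) \<longrightarrow> outer_pair \<omega> \<in> DS"
      using DS(2) by (rule AE_isolated_imp_outer_pair)
    then have "AE \<omega> in M. \<omega> \<in> ?I \<longrightarrow> \<omega> \<in> ?T"
    proof eventually_elim
      case (elim \<omega>)
      then show ?case
        by (auto simp: nonempty_def)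
    qed
    then have "prob ?I \<le> prob ?T"
      using T by (rule finite_measure_mono_AE)
    moreover have "?I \<inter> avoiding
        = {\<omega> \<in> space M. PP \<omega> \<inter> S \<noteq> {} \<and> r_isolated r (PP \<omega>) (X \<omega>) \<and> card (PP \<omega> \<inter> Z) = 0}"
      unfolding avoiding_def by blast
    ultimately show ?thesis
      using mult_left_mono[of "prob ?I" "prob ?T" "prob avoiding"] by simp
  qed
qed

end

theorem mainTheorem6:
  fixes M :: "'w measure" and PP :: "'w \<Rightarrow> ('a::euclidean_space) set"
    and X :: "'w \<Rightarrow> 'a" and lam r :: real and S Z :: "'a set"
  assumes "lam > 0"
    and "poisson_pp M lam PP"
    and "S \<in> sets lborel" and "emeasure lborel S > 0" and "emeasure lborel S < \<infinity>"
    and "r > 0"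
    and "uniform_selection M PP S X"
    and "Z \<in> sets lborel" and "emeasure lborel Z < \<infinity>" and "Z \<inter> S = {}"
  shows "measure M {\<omega> \<in> space M. PP \<omega> \<inter> S \<noteq> {} \<and> r_isolated r (PP \<omega>) (X \<omega>)
                                     \<and> card (PP \<omega> \<inter> Z) = 0}
           / measure M {\<omega> \<in> space M. card (PP \<omega> \<inter> Z) = 0}
         \<ge> measure M {\<omega> \<in> space M. PP \<omega> \<inter> S \<noteq> {} \<and> r_isolated r (PP \<omega>) (X \<omega>)}"
proof -
  interpret poisson_selection M lam PP S Z X
    using assms by unfold_locales auto
  have "prob avoiding * prob {\<omega> \<in> space M. PP \<omega> \<inter> S \<noteq> {} \<and> r_isolated r (PP \<omega>) (X \<omega>)}
      \<le> prob {\<omega> \<in> space M. PP \<omega> \<inter> S \<noteq> {} \<and> r_isolated r (PP \<omega>) (X \<omega>) \<and> card (PP \<omega> \<inter> Z) = 0}"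
    using nonempty_event[OF assms(1,4)] assms(6) by (intro prob_isolated_avoiding) auto
  moreover have "prob avoiding > 0"
    by (simp add: prob_avoiding)
  ultimately show ?thesis
    unfolding avoiding_def by (simp add: pos_le_divide_eq mult.commute)
qed

end
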